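(* Let $\mu_c$ be the 1-D Gaussian mixture below with $p=1/2$ and $\sigma_1=\sigma_2=\sigma$, and let $u>0$ with $|\gamma_1+\gamma_2|\le 2u$. For $\epsilon>0$ consider $$\max_{\mu_p\in\mathcal{Q}(u)}\big[L(h_{1,b_p};\mu_c)+\epsilon L(h_{1,b_p};\mu_p)\big],\qquad b_p=\arg\min_{b\in\mathbb{R}}\big[L(h_{1,b};\mu_c)+\epsilon L(h_{1,b};\mu_p)\big].$$ Then there exists $\alpha\in[0,1]$ such that the optimal value of this problem is attained at $\mu_p=\nu_\alpha$.
   Context: Data model: $(x,y)\in\mathbb{R}\times\{-1,+1\}$ with $y=-1,\ x\sim\mathcal{N}(\gamma_1,\sigma_1^2)$ with probability $p$, and $y=+1,\ x\sim\mathcal{N}(\gamma_2,\sigma_2^2)$ with probability $1-p$. $h_{w,b}(x)=\mathrm{sgn}(wx+b)$ with $w\in\{-1,1\}$, $b\in\mathbb{R}$. Hinge loss $\ell(h_{w,b};x,y)=\max\{0,1-y(wx+b)\}$; $L(h;\mu)=\mathbb{E}_\mu[\ell(h;x,y)]$. $\mathcal{Q}(u)$ is the set of distributions supported on $[-u,u]\times\{-1,+1\}$. Two-point distribution $\nu_\alpha$: $(x,y)=(-u,+1)$ with probability $\alpha$ and $(u,-1)$ with probability $1-\alpha$. *)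

theory Defs
  imports "HOL-Probability.Probability"
begin

definition hinge :: "real \<Rightarrow> real \<Rightarrow> real \<Rightarrow> real \<Rightarrow> real" where
  "hinge w b x y = max 0 (1 - y * (w * x + b))"

definition L_meas :: "(real \<times> real) measure \<Rightarrow> real \<Rightarrow> real \<Rightarrow> real" where
  "L_meas M w b = (\<integral>z. hinge w b (fst z) (snd z) \<partial>M)"

definition L_gmm :: "real \<Rightarrow> real \<Rightarrow> real \<Rightarrow> real \<Rightarrow> real \<Rightarrow> real \<Rightarrow> real \<Rightarrow> real" where
  "L_gmm p g1 s1 g2 s2 w b =
     p * (\<integral>x. normal_density g1 s1 x * hinge w b x (-1) \<partial>lborel)
   + (1 - p) * (\<integral>x. normal_density g2 s2 x * hinge w b x 1 \<partial>lborel)"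

definition Q :: "real \<Rightarrow> (real \<times> real) measure set" where
  "Q u = {M. prob_space M \<and> sets M = sets borel \<and>
             (AE z in M. z \<in> {-u..u} \<times> {-1, 1})}"

definition nu :: "real \<Rightarrow> real \<Rightarrow> (real \<times> real) measure" where
  "nu u \<alpha> = distr (measure_pmf (bernoulli_pmf \<alpha>)) borel
              (\<lambda>c. if c then (-u, 1) else (u, -1))"

definition obj :: "real \<Rightarrow> real \<Rightarrow> real \<Rightarrow> real \<Rightarrow> (real \<times> real) measure \<Rightarrow> real \<Rightarrow> real" where
  "obj g1 g2 s \<epsilon> M b = L_gmm (1/2) g1 s g2 s 1 b + \<epsilon> * L_meas M 1 b"

end

theory Submission
  imports Defs
begin

text \<open>
  On \<open>[-u,u] \<times> {-1,1}\<close> the hinge loss of \<open>h\<^sub>1\<^sub>,\<^sub>b\<close> is largest at the two points \<open>(-u,1)\<close>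
  and \<open>(u,-1)\<close>, so for any poisoning distribution \<open>\<mu>\<^sub>p \<in> Q(u)\<close> with label-one mass \<open>q\<close> the
  objective is dominated pointwise in \<open>b\<close> by the objective of \<open>\<nu>\<^sub>q\<close>; hence the optimal value
  for \<open>\<mu>\<^sub>p\<close> is at most \<open>G(q) = min\<^sub>b obj(\<nu>\<^sub>q, b)\<close>. The clean loss is 1-Lipschitz and coercive in
  \<open>b\<close>, so the minima defining \<open>G\<close> exist in a fixed interval \<open>[-R,R]\<close>, and since the objective of
  \<open>\<nu>\<^sub>\<alpha>\<close> is Lipschitz in \<open>\<alpha>\<close> uniformly for \<open>b \<in> [-R,R]\<close>, \<open>G\<close> is continuous and attains its
  maximum on \<open>[0,1]\<close>.
\<close>

lemma hinge_nonneg: "0 \<le> hinge w b x y"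
  by (simp add: hinge_def)

lemma hinge_ge_affine: "1 - y * (w * x + b) \<le> hinge w b x y"
  by (simp add: hinge_def)

lemma hinge_lipschitz_offset:
  assumes "\<bar>y\<bar> \<le> 1"
  shows "\<bar>hinge w b x y - hinge w b' x y\<bar> \<le> \<bar>b - b'\<bar>"
proof -
  have "\<bar>y * (b' - b)\<bar> \<le> 1 * \<bar>b - b'\<bar>"
    unfolding abs_mult by (intro mult_mono assms) auto
  then show ?thesis
    unfolding hinge_def by (simp add: algebra_simps)
qed

lemma hinge_le:
  assumes "\<bar>y\<bar> \<le> 1"
  shows "hinge w b x y \<le> 1 + \<bar>b\<bar> + \<bar>w * m\<bar> + \<bar>w\<bar> * \<bar>x - m\<bar>"
proof -
  have "\<bar>y * (w * x + b)\<bar> \<le> 1 * \<bar>w * x + b\<bar>"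
    unfolding abs_mult by (intro mult_right_mono assms) auto
  moreover have "\<bar>w * x + b\<bar> = \<bar>b + (w * m + w * (x - m))\<bar>"
    by (simp add: algebra_simps)
  moreover note abs_triangle_ineq[of b "w * m + w * (x - m)"] abs_triangle_ineq[of "w * m" "w * (x - m)"]
  ultimately have "\<bar>y * (w * x + b)\<bar> \<le> \<bar>b\<bar> + \<bar>w * m\<bar> + \<bar>w\<bar> * \<bar>x - m\<bar>"
    unfolding abs_mult[of w "x - m"] by linarith
  then show ?thesis
    unfolding hinge_def by (simp add: abs_le_iff)
qed

lemma integrable_normal_hinge:
  assumes "0 < s" "\<bar>y\<bar> \<le> 1"
  shows "integrable lborel (\<lambda>x. normal_density m s x * hinge w b x y)"
proof (rule Bochner_Integration.integrable_bound)
  let ?c = "1 + \<bar>b\<bar> + \<bar>w * m\<bar>"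
  show "integrable lborel (\<lambda>x. ?c * normal_density m s x + \<bar>w\<bar> * (normal_density m s x * \<bar>x - m\<bar> ^ 1))"
    using integrable_normal_moment_abs[OF assms(1), of m 1] integrable_normal_density[OF assms(1), of m]
    by (intro Bochner_Integration.integrable_add integrable_mult_right)
  show "(\<lambda>x. normal_density m s x * hinge w b x y) \<in> borel_measurable lborel"
    unfolding hinge_def by measurable
  show "AE x in lborel. norm (normal_density m s x * hinge w b x y)
          \<le> norm (?c * normal_density m s x + \<bar>w\<bar> * (normal_density m s x * \<bar>x - m\<bar> ^ 1))"
  proof (intro AE_I2)
    fix x
    have "normal_density m s x * hinge w b x y
          \<le> normal_density m s x * (?c + \<bar>w\<bar> * \<bar>x - m\<bar>)"
      by (intro mult_left_mono hinge_le assms) auto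
    then show "norm (normal_density m s x * hinge w b x y)
          \<le> norm (?c * normal_density m s x + \<bar>w\<bar> * (normal_density m s x * \<bar>x - m\<bar> ^ 1))"
      by (simp add: hinge_nonneg algebra_simps)
  qed
qed

lemma normal_hinge_nonneg: "0 \<le> (\<integral>x. normal_density m s x * hinge w b x y \<partial>lborel)"
  by (intro integral_nonneg_AE AE_I2 mult_nonneg_nonneg hinge_nonneg) auto

lemma normal_hinge_lipschitz_offset:
  assumes "0 < s" "\<bar>y\<bar> \<le> 1"
  shows "\<bar>(\<integral>x. normal_density m s x * hinge w b x y \<partial>lborel)
          - (\<integral>x. normal_density m s x * hinge w b' x y \<partial>lborel)\<bar> \<le> \<bar>b - b'\<bar>"
proof -
  have "(\<integral>x. normal_density m s x * hinge w b x y \<partial>lborel)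
          - (\<integral>x. normal_density m s x * hinge w b' x y \<partial>lborel)
        = (\<integral>x. normal_density m s x * (hinge w b x y - hinge w b' x y) \<partial>lborel)"
    unfolding right_diff_distrib
    by (intro Bochner_Integration.integral_diff[symmetric] integrable_normal_hinge assms)
  also have "\<bar>\<dots>\<bar> \<le> (\<integral>x. normal_density m s x * \<bar>b - b'\<bar> \<partial>lborel)"
  proof (rule integral_abs_bound_integral)
    show "integrable lborel (\<lambda>x. normal_density m s x * (hinge w b x y - hinge w b' x y))"
      unfolding right_diff_distrib
      by (intro Bochner_Integration.integrable_diff integrable_normal_hinge assms)
    show "integrable lborel (\<lambda>x. normal_density m s x * \<bar>b - b'\<bar>)"
      using integrable_normal_density[OF assms(1), of m] by simp
    show "\<bar>normal_density m s x * (hinge w b x y - hinge w b' x y)\<bar> \<le> normal_density m s x * \<bar>b - b'\<bar>" for x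
      unfolding abs_mult by (simp add: mult_left_mono hinge_lipschitz_offset assms)
  qed
  also have "\<dots> = \<bar>b - b'\<bar>"
    using integral_normal_density[OF assms(1), of m] by simp
  finally show ?thesis .
qed

lemma normal_hinge_ge:
  assumes "0 < s" "\<bar>y\<bar> \<le> 1"
  shows "1 - y * (w * m + b) \<le> (\<integral>x. normal_density m s x * hinge w b x y \<partial>lborel)"
proof -
  note moments = integrable_normal_moment_nz_1[OF assms(1), of m] integral_normal_moment_nz_1[OF assms(1), of m]
    integrable_normal_density[OF assms(1), of m] integral_normal_density[OF assms(1), of m]
  have int: "integrable lborel (\<lambda>x. (1 - y * b) * normal_density m s x - y * w * (normal_density m s x * x))"
    using moments by auto
  have "(\<integral>x. (1 - y * b) * normal_density m s x - y * w * (normal_density m s x * x) \<partial>lborel)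
        = (1 - y * b) * (\<integral>x. normal_density m s x \<partial>lborel) - y * w * (\<integral>x. normal_density m s x * x \<partial>lborel)"
    using moments by (subst Bochner_Integration.integral_diff) auto
  then have "1 - y * (w * m + b) = (\<integral>x. (1 - y * b) * normal_density m s x - y * w * (normal_density m s x * x) \<partial>lborel)"
    using moments by (simp add: algebra_simps)
  also have "\<dots> \<le> (\<integral>x. normal_density m s x * hinge w b x y \<partial>lborel)"
  proof (rule integral_mono[OF int integrable_normal_hinge[OF assms]])
    fix x
    have "normal_density m s x * (1 - y * (w * x + b)) \<le> normal_density m s x * hinge w b x y"
      by (intro mult_left_mono hinge_ge_affine) auto
    then show "(1 - y * b) * normal_density m s x - y * w * (normal_density m s x * x)
               \<le> normal_density m s x * hinge w b x y"
      by (simp add: algebra_simps)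
  qed
  finally show ?thesis .
qed

lemma L_gmm_lipschitz_offset:
  assumes "0 < s1" "0 < s2" "p \<in> {0..1}"
  shows "\<bar>L_gmm p g1 s1 g2 s2 w b - L_gmm p g1 s1 g2 s2 w b'\<bar> \<le> \<bar>b - b'\<bar>"
proof -
  let ?I1 = "\<lambda>b. \<integral>x. normal_density g1 s1 x * hinge w b x (-1) \<partial>lborel"
  let ?I2 = "\<lambda>b. \<integral>x. normal_density g2 s2 x * hinge w b x 1 \<partial>lborel"
  have "\<bar>L_gmm p g1 s1 g2 s2 w b - L_gmm p g1 s1 g2 s2 w b'\<bar>
        = \<bar>p * (?I1 b - ?I1 b') + (1 - p) * (?I2 b - ?I2 b')\<bar>"
    unfolding L_gmm_def by (simp add: algebra_simps)
  also have "\<dots> \<le> p * \<bar>?I1 b - ?I1 b'\<bar> + (1 - p) * \<bar>?I2 b - ?I2 b'\<bar>"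
    using assms(3) by (auto simp: abs_mult intro: order.trans[OF abs_triangle_ineq])
  also have "\<dots> \<le> p * \<bar>b - b'\<bar> + (1 - p) * \<bar>b - b'\<bar>"
    using assms by (intro add_mono mult_left_mono normal_hinge_lipschitz_offset) auto
  finally show ?thesis by (simp add: algebra_simps)
qed

lemma continuous_on_L_gmm:
  assumes "0 < s1" "0 < s2" "p \<in> {0..1}"
  shows "continuous_on UNIV (L_gmm p g1 s1 g2 s2 w)"
  by (rule lipschitz_on_continuous_on[where L = 1])
    (auto simp: lipschitz_on_def dist_real_def intro: L_gmm_lipschitz_offset[OF assms])

lemma L_gmm_coercive:
  assumes "0 < s1" "0 < s2"
  shows "(\<bar>b\<bar> - \<bar>w * g1\<bar> - \<bar>w * g2\<bar>) / 2 \<le> L_gmm (1/2) g1 s1 g2 s2 w b"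
  using normal_hinge_ge[OF assms(1), of "-1" w g1 b] normal_hinge_ge[OF assms(2), of 1 w g2 b]
    normal_hinge_nonneg[of g1 s1 w b "-1"] normal_hinge_nonneg[of g2 s2 w b 1]
    abs_ge_self[of "w * g1"] abs_ge_minus_self[of "w * g2"]
  unfolding L_gmm_def by (cases "0 \<le> b") auto

definition two_point_loss :: "real \<Rightarrow> real \<Rightarrow> real \<Rightarrow> real" where
  "two_point_loss u \<alpha> b = \<alpha> * hinge 1 b (-u) 1 + (1 - \<alpha>) * hinge 1 b u (-1)"

lemma L_meas_nu:
  assumes "\<alpha> \<in> {0..1}"
  shows "L_meas (nu u \<alpha>) 1 b = two_point_loss u \<alpha> b"
  unfolding L_meas_def nu_def two_point_loss_def using assms
  by (subst integral_distr)
    (auto simp: hinge_def intro!: borel_measurable_continuous_onI continuous_intros)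

lemma nu_in_Q:
  assumes "0 \<le> u"
  shows "nu u \<alpha> \<in> Q u"
  unfolding Q_def nu_def
proof (intro CollectI conjI)
  show "prob_space (distr (measure_pmf (bernoulli_pmf \<alpha>)) borel (\<lambda>c. if c then (- u, 1) else (u, - 1)))"
    by (intro prob_space.prob_space_distr) (auto simp: measure_pmf.prob_space_axioms)
  show "AE z in distr (measure_pmf (bernoulli_pmf \<alpha>)) borel (\<lambda>c. if c then (- u, 1::real) else (u, - 1)).
          z \<in> {- u..u} \<times> {- 1, 1}"
    using assms by (subst AE_distr_iff) (auto intro!: borel_closed closed_Times)
qed simp

lemma measure_Q_in_unit: "M \<in> Q u \<Longrightarrow> measure M A \<in> {0..1}"
  unfolding Q_def by (auto intro: prob_space.prob_le_1)

lemma two_point_loss_nonneg: "\<alpha> \<in> {0..1} \<Longrightarrow> 0 \<le> two_point_loss u \<alpha> b"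
  unfolding two_point_loss_def by (auto intro!: add_nonneg_nonneg mult_nonneg_nonneg hinge_nonneg)

lemma two_point_loss_zero: "0 \<le> u \<Longrightarrow> two_point_loss u \<alpha> 0 = 1 + u"
  unfolding two_point_loss_def hinge_def by (simp add: algebra_simps)

lemma continuous_on_two_point_loss: "continuous_on UNIV (two_point_loss u \<alpha>)"
  unfolding two_point_loss_def hinge_def by (intro continuous_intros)

lemma two_point_loss_lipschitz_weight:
  assumes "0 \<le> u" "\<bar>b\<bar> \<le> R"
  shows "\<bar>two_point_loss u \<alpha> b - two_point_loss u \<alpha>' b\<bar> \<le> (1 + u + R) * \<bar>\<alpha> - \<alpha>'\<bar>"
proof -
  have "\<bar>hinge 1 b (-u) 1 - hinge 1 b u (-1)\<bar> \<le> 1 + u + R"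
    using assms unfolding hinge_def by auto
  then have "\<bar>\<alpha> - \<alpha>'\<bar> * \<bar>hinge 1 b (-u) 1 - hinge 1 b u (-1)\<bar> \<le> \<bar>\<alpha> - \<alpha>'\<bar> * (1 + u + R)"
    by (intro mult_left_mono) auto
  moreover have "two_point_loss u \<alpha> b - two_point_loss u \<alpha>' b
                 = (\<alpha> - \<alpha>') * (hinge 1 b (-u) 1 - hinge 1 b u (-1))"
    unfolding two_point_loss_def by (simp add: algebra_simps)
  ultimately show ?thesis by (simp add: abs_mult mult.commute)
qed

text \<open>Label \<open>1\<close> makes the hinge loss decreasing in \<open>x\<close>, label \<open>-1\<close> increasing.\<close>
lemma L_meas_le_two_point_loss:
  assumes "M \<in> Q u"
  shows "L_meas M 1 b \<le> two_point_loss u (measure M {z. snd z = 1}) b"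
proof -
  from assms have "prob_space M" and sets: "sets M = sets borel"
    and ae: "AE z in M. z \<in> {-u..u} \<times> {-1, 1}"
    unfolding Q_def by auto
  interpret prob_space M by fact
  define A where "A = hinge 1 b (-u) 1"
  define B where "B = hinge 1 b u (-1)"
  define S where "S = {z::real \<times> real. snd z = 1}"
  have S: "S \<in> sets M"
    unfolding sets S_def by (intro borel_closed closed_Collect_eq continuous_intros)
  have measurable: "(\<lambda>z. hinge 1 b (fst z) (snd z)) \<in> borel_measurable M"
    unfolding measurable_cong_sets[OF sets refl] hinge_def
    by (intro borel_measurable_continuous_onI continuous_intros)
  have "AE z in M. norm (hinge 1 b (fst z) (snd z)) \<le> norm (1 + u + \<bar>b\<bar>)"
    using ae by eventually_elim (auto simp: hinge_def)
  then have integrable: "integrable M (\<lambda>z. hinge 1 b (fst z) (snd z))"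
    by (rule Bochner_Integration.integrable_bound[OF integrable_const measurable])
  have "AE z in M. hinge 1 b (fst z) (snd z) \<le> B + (A - B) * indicator S z"
    using ae by eventually_elim (auto simp: A_def B_def S_def hinge_def indicator_def)
  then have "L_meas M 1 b \<le> (\<integral>z. B + (A - B) * indicator S z \<partial>M)"
    unfolding L_meas_def using S
    by (intro integral_mono_AE integrable)
      (auto intro!: Bochner_Integration.integrable_add integrable_real_indicator simp: less_top[symmetric])
  also have "\<dots> = B + (A - B) * measure M S"
    using S by (subst Bochner_Integration.integral_add)
      (auto simp: prob_space less_top[symmetric] intro!: integrable_real_indicator)
  finally show ?thesis
    unfolding A_def B_def S_def two_point_loss_def by (simp add: algebra_simps)
qed

lemma obj_nu:
  assumes "\<alpha> \<in> {0..1}"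
  shows "obj g1 g2 s \<epsilon> (nu u \<alpha>) b = L_gmm (1/2) g1 s g2 s 1 b + \<epsilon> * two_point_loss u \<alpha> b"
  unfolding obj_def L_meas_nu[OF assms] ..

lemma obj_le_obj_nu:
  assumes "M \<in> Q u" "0 \<le> \<epsilon>"
  shows "obj g1 g2 s \<epsilon> M b \<le> obj g1 g2 s \<epsilon> (nu u (measure M {z. snd z = 1})) b"
  using mult_left_mono[OF L_meas_le_two_point_loss[OF assms(1)] assms(2)]
  unfolding obj_nu[OF measure_Q_in_unit[OF assms(1)]] unfolding obj_def by (rule add_left_mono)

lemma continuous_coercive_attains_min:
  fixes f :: "real \<Rightarrow> real"
  assumes cont: "continuous_on UNIV f" and coercive: "\<And>b. R < \<bar>b\<bar> \<Longrightarrow> f 0 < f b"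
  shows "\<exists>b. \<bar>b\<bar> \<le> R \<and> (\<forall>y. f b \<le> f y)"
proof -
  have "0 \<le> R"
  proof (rule ccontr)
    assume "\<not> 0 \<le> R"
    then show False using coercive[of 0] by simp
  qed
  obtain b where b: "b \<in> {-R..R}" "\<forall>y\<in>{-R..R}. f b \<le> f y"
    using continuous_attains_inf[OF compact_Icc, of "-R" R f] continuous_on_subset[OF cont, of "{-R..R}"]
      \<open>0 \<le> R\<close> by auto
  have "f b \<le> f y" for y
  proof (cases "\<bar>y\<bar> \<le> R")
    case True
    then show ?thesis using b(2) by (simp add: abs_le_iff)
  next
    case False
    have "f b \<le> f 0" using b(2) \<open>0 \<le> R\<close> by simp
    then show ?thesis using coercive[of y] False by simp
  qed
  then show ?thesis
    using b(1) by (auto simp: abs_le_iff)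
qed

text \<open>The minimisers can be taken in \<open>[-R,R]\<close> for every \<open>a\<close>, where the Lipschitz bound makes
  \<open>a \<mapsto> min\<^sub>b F a b\<close> Lipschitz as well.\<close>
lemma max_of_min_attained:
  fixes F :: "'a::metric_space \<Rightarrow> real \<Rightarrow> real"
  assumes "compact A" "A \<noteq> {}"
    and cont: "\<And>a. a \<in> A \<Longrightarrow> continuous_on UNIV (F a)"
    and coercive: "\<And>a b. a \<in> A \<Longrightarrow> R < \<bar>b\<bar> \<Longrightarrow> F a 0 < F a b"
    and lipschitz: "\<And>a a' b. a \<in> A \<Longrightarrow> a' \<in> A \<Longrightarrow> \<bar>b\<bar> \<le> R \<Longrightarrow> \<bar>F a b - F a' b\<bar> \<le> K * dist a a'"
  shows "\<exists>a\<in>A. \<exists>b. is_arg_min (F a) (\<lambda>_. True) b \<and> (\<forall>a'\<in>A. \<exists>b'. F a' b' \<le> F a b)"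
proof -
  define bmin where "bmin a = (SOME b. \<bar>b\<bar> \<le> R \<and> (\<forall>y. F a b \<le> F a y))" for a
  have bmin: "\<bar>bmin a\<bar> \<le> R \<and> (\<forall>y. F a (bmin a) \<le> F a y)" if "a \<in> A" for a
    unfolding bmin_def
    by (rule someI_ex, rule continuous_coercive_attains_min[OF cont coercive]) (use that in auto)
  define G where "G a = F a (bmin a)" for a
  have G_le: "G a \<le> G a' + K * dist a a'" if "a \<in> A" "a' \<in> A" for a a'
  proof -
    have "G a \<le> F a (bmin a')"
      unfolding G_def using bmin[OF that(1)] by blast
    also have "\<dots> \<le> F a' (bmin a') + K * dist a a'"
      using lipschitz[OF that, of "bmin a'"] bmin[OF that(2)] by (auto simp: abs_le_iff)
    finally show ?thesis
      unfolding G_def .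
  qed
  have "(max K 0)-lipschitz_on A G"
    unfolding lipschitz_on_def dist_real_def
  proof (intro conjI ballI)
    fix a a' assume "a \<in> A" "a' \<in> A"
    moreover have "K * dist a a' \<le> max K 0 * dist a a'"
      by (intro mult_right_mono) auto
    ultimately show "\<bar>G a - G a'\<bar> \<le> max K 0 * dist a a'"
      using G_le[of a a'] G_le[of a' a] by (auto simp: dist_commute abs_le_iff)
  qed simp
  then obtain a where "a \<in> A" "\<And>a'. a' \<in> A \<Longrightarrow> G a' \<le> G a"
    using continuous_attains_sup[OF assms(1,2) lipschitz_on_continuous_on] by blast
  then show ?thesis
    unfolding G_def is_arg_min_def using bmin by (meson not_less)
qed

lemma obj_nu_max_of_min_attained:
  assumes "0 < s" "0 \<le> u" "0 \<le> \<epsilon>"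
  shows "\<exists>\<alpha>\<in>{0..1}. \<exists>b. is_arg_min (obj g1 g2 s \<epsilon> (nu u \<alpha>)) (\<lambda>_. True) b \<and>
           (\<forall>\<alpha>'\<in>{0..1}. \<exists>b'. obj g1 g2 s \<epsilon> (nu u \<alpha>') b' \<le> obj g1 g2 s \<epsilon> (nu u \<alpha>) b)"
proof (rule max_of_min_attained)
  let ?Lc = "L_gmm (1/2) g1 s g2 s 1"
  define R where "R = 2 * (?Lc 0 + \<epsilon> * (1 + u)) + \<bar>g1\<bar> + \<bar>g2\<bar>"
  show "continuous_on UNIV (obj g1 g2 s \<epsilon> (nu u \<alpha>))" if "\<alpha> \<in> {0..1}" for \<alpha>
    unfolding obj_nu[OF that, abs_def] using assms
    by (intro continuous_intros continuous_on_L_gmm continuous_on_two_point_loss) auto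
  show "obj g1 g2 s \<epsilon> (nu u \<alpha>) 0 < obj g1 g2 s \<epsilon> (nu u \<alpha>) b"
    if "\<alpha> \<in> {0..1}" "R < \<bar>b\<bar>" for \<alpha> b
  proof -
    have "obj g1 g2 s \<epsilon> (nu u \<alpha>) 0 = (R - \<bar>g1\<bar> - \<bar>g2\<bar>) / 2"
      unfolding obj_nu[OF that(1)] two_point_loss_zero[OF assms(2)] R_def by simp
    also have "\<dots> < ?Lc b"
      using L_gmm_coercive[OF assms(1,1), of b 1 g1 g2] that(2) by simp
    also have "\<dots> \<le> obj g1 g2 s \<epsilon> (nu u \<alpha>) b"
      unfolding obj_nu[OF that(1)] using two_point_loss_nonneg[OF that(1)] assms(3) by simp
    finally show ?thesis .
  qed
  show "\<bar>obj g1 g2 s \<epsilon> (nu u \<alpha>) b - obj g1 g2 s \<epsilon> (nu u \<alpha>') b\<bar> \<le> \<epsilon> * (1 + u + R) * dist \<alpha> \<alpha>'"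
    if "\<alpha> \<in> {0..1}" "\<alpha>' \<in> {0..1}" "\<bar>b\<bar> \<le> R" for \<alpha> \<alpha>' b
    using mult_left_mono[OF two_point_loss_lipschitz_weight[OF assms(2) that(3), of \<alpha> \<alpha>'] assms(3)]
    unfolding obj_nu[OF that(1)] obj_nu[OF that(2)] dist_real_def
    by (simp add: abs_mult mult.assoc assms(3) flip: right_diff_distrib)
qed auto

theorem mainTheorem5:
  fixes g1 g2 s u \<epsilon> :: real
  assumes "s > 0" and "u > 0" and "\<bar>g1 + g2\<bar> \<le> 2 * u" and "\<epsilon> > 0"
  shows "\<exists>\<alpha>\<in>{0..1}. nu u \<alpha> \<in> Q u \<and>
           (\<exists>b\<alpha>. is_arg_min (obj g1 g2 s \<epsilon> (nu u \<alpha>)) (\<lambda>_. True) b\<alpha> \<and>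
              (\<forall>M\<in>Q u. \<forall>b. is_arg_min (obj g1 g2 s \<epsilon> M) (\<lambda>_. True) b \<longrightarrow>
                  obj g1 g2 s \<epsilon> M b \<le> obj g1 g2 s \<epsilon> (nu u \<alpha>) b\<alpha>))"
proof -
  obtain \<alpha> b\<alpha> where \<alpha>: "\<alpha> \<in> {0..1}" and b\<alpha>: "is_arg_min (obj g1 g2 s \<epsilon> (nu u \<alpha>)) (\<lambda>_. True) b\<alpha>"
    and max: "\<And>\<alpha>'. \<alpha>' \<in> {0..1} \<Longrightarrow> \<exists>b'. obj g1 g2 s \<epsilon> (nu u \<alpha>') b' \<le> obj g1 g2 s \<epsilon> (nu u \<alpha>) b\<alpha>"
    using obj_nu_max_of_min_attained[of s u \<epsilon> g1 g2] assms by auto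
  have dominated: "obj g1 g2 s \<epsilon> M b \<le> obj g1 g2 s \<epsilon> (nu u \<alpha>) b\<alpha>"
    if M: "M \<in> Q u" and b: "is_arg_min (obj g1 g2 s \<epsilon> M) (\<lambda>_. True) b" for M b
  proof -
    let ?q = "measure M {z. snd z = 1}"
    obtain b' where b': "obj g1 g2 s \<epsilon> (nu u ?q) b' \<le> obj g1 g2 s \<epsilon> (nu u \<alpha>) b\<alpha>"
      using max[OF measure_Q_in_unit[OF M]] by blast
    have "obj g1 g2 s \<epsilon> M b \<le> obj g1 g2 s \<epsilon> M b'"
      using b by (auto simp: is_arg_min_def not_less)
    also have "\<dots> \<le> obj g1 g2 s \<epsilon> (nu u ?q) b'"
      using obj_le_obj_nu[OF M] assms(4) by simp
    finally show ?thesis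
      using b' by linarith
  qed
  show ?thesis
    using assms(2) by (intro bexI[OF _ \<alpha>] conjI nu_in_Q exI[of _ b\<alpha>] b\<alpha> ballI allI impI dominated) auto
qed

end
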